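(* Let $d,\ell\ge1$, let $a\in\mathbb{R}^d$, and let $\mathbf{A}=\mathbf{S}+ae_d^T\in\mathbb{R}^{d\times d}$ be the companion matrix with last column $a$. Let $\mathbf{B}\in\mathbb{R}^{d}$ (a column), $\mathbf{C}\in\mathbb{R}^{1\times d}$, and $\tilde{\mathbf{C}}=\mathbf{C}(\mathbf{I}-\mathbf{A}^\ell)\in\mathbb{R}^{d}$. Let $\omega=\exp(-2\pi i/\ell)$ and assume $\mathbf{I}-\omega^m\mathbf{A}$ is invertible for every $m=0,\dots,\ell-1$. Consider the following algorithm (Algorithm 1). 1. For $u,v\in\mathbb{R}^d$ define $\mathrm{quad}(u,v)\in\mathbb{C}^\ell$ by: form $q\in\mathbb{R}^d$ with $q_k=\sum_{j=1}^{d-k}u_{j+k}v_j$ for $k=0,\dots,d-1$; zero-pad $q$ to length $\ell\lceil d/\ell\rceil$; split it into $\lceil d/\ell\rceil$ consecutive chunks $q^{(1)},\dots,q^{(\lceil d/\ell\rceil)}$ of length $\ell$; return the length-$\ell$ discrete Fourier transform $\mathcal{F}_\ell(q^{(1)}+\dots+q^{(\lceil d/\ell\rceil)})$, where $\mathcal{F}_\ell(w)[m]=\sum_{k=0}^{\ell-1}w_k\omega^{mk}$. 2. Compute $z=(\bar\omega^0,\bar\omega^1,\dots,\bar\omega^{\ell-1})$. 3. Compute, entrywise for $m=0,\dots,\ell-1$, $$\tilde{\mathbf{F}}^y=\mathrm{quad}(\tilde{\mathbf{C}},\mathbf{B})+\frac{\mathrm{quad}(\tilde{\mathbf{C}},a)\cdot\mathrm{quad}(e_d,\mathbf{B})}{z-\mathrm{quad}(e_d,a)}\in\mathbb{C}^\ell.$$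 4. Return $\mathbf{F}^y=\mathcal{F}_\ell^{-1}(\tilde{\mathbf{F}}^y)$. Then Algorithm 1 returns the output filter $\mathbf{F}^y=(\mathbf{C}\mathbf{B},\mathbf{C}\mathbf{A}\mathbf{B},\mathbf{C}\mathbf{A}^2\mathbf{B},\dots,\mathbf{C}\mathbf{A}^{\ell-1}\mathbf{B})$.
   Context: $\mathbf{S}$ denotes the $d\times d$ down-shift matrix (ones on the first subdiagonal, zeros elsewhere), $e_d=(0,\dots,0,1)^T$ is the $d$-th standard basis vector, and $\mathbf{I}$ is the identity. $\mathcal{F}_\ell^{-1}$ is the inverse of the length-$\ell$ DFT $\mathcal{F}_\ell$. The division and product in step 3 are entrywise. *)

theory Defs
  imports Complex_Main "Jordan_Normal_Form.Matrix"
begin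

(* Indices are 0-based: entry i of a length-d vector is x $ i, 0 <= i < d. *)

definition omega :: "nat \<Rightarrow> complex" where
  "omega l = exp (- 2 * of_real pi * \<i> / of_nat l)"

definition shift_mat :: "nat \<Rightarrow> real mat" where
  "shift_mat d = mat d d (\<lambda>(i, j). if i = j + 1 then 1 else 0)"

definition companion :: "nat \<Rightarrow> real vec \<Rightarrow> real mat" where
  "companion d a = shift_mat d + mat d d (\<lambda>(i, j). a $ i * (unit_vec d (d - 1)) $ j)"

definition dft :: "nat \<Rightarrow> complex vec \<Rightarrow> complex vec" where
  "dft l w = vec l (\<lambda>m. \<Sum>k<l. w $ k * omega l ^ (m * k))"

definition idft :: "nat \<Rightarrow> complex vec \<Rightarrow> complex vec" where
  "idft l W = vec l (\<lambda>k. (1 / of_nat l) * (\<Sum>m<l. W $ m * cnj (omega l) ^ (m * k)))"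

definition quad_q :: "nat \<Rightarrow> real vec \<Rightarrow> real vec \<Rightarrow> real vec" where
  "quad_q d u v = vec d (\<lambda>k. \<Sum>j<d - k. u $ (j + k) * v $ j)"

definition num_chunks :: "nat \<Rightarrow> nat \<Rightarrow> nat" where
  "num_chunks d l = nat \<lceil>real d / real l\<rceil>"

definition zero_pad :: "nat \<Rightarrow> real vec \<Rightarrow> real vec" where
  "zero_pad n q = vec n (\<lambda>i. if i < dim_vec q then q $ i else 0)"

definition chunk_sum :: "nat \<Rightarrow> nat \<Rightarrow> real vec \<Rightarrow> real vec" where
  "chunk_sum l nc p = vec l (\<lambda>k. \<Sum>c<nc. p $ (c * l + k))"

definition quad :: "nat \<Rightarrow> nat \<Rightarrow> real vec \<Rightarrow> real vec \<Rightarrow> complex vec" where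
  "quad d l u v =
     (let q = quad_q d u v;
          nc = num_chunks d l;
          p = zero_pad (l * nc) q
      in dft l (map_vec complex_of_real (chunk_sum l nc p)))"

definition algorithm1 :: "nat \<Rightarrow> nat \<Rightarrow> real vec \<Rightarrow> real vec \<Rightarrow> real mat \<Rightarrow> complex vec" where
  "algorithm1 d l a B C =
     (let A = companion d a;
          Ct = row (C * (1\<^sub>m d - A ^\<^sub>m l)) 0;
          ed = unit_vec d (d - 1);
          z = vec l (\<lambda>m. cnj (omega l) ^ m);
          q1 = quad d l Ct B; q2 = quad d l Ct a; q3 = quad d l ed B; q4 = quad d l ed a;
          Fy = vec l (\<lambda>m. q1 $ m + q2 $ m * q3 $ m / (z $ m - q4 $ m))
      in idft l Fy)"

end

theory Submission
  imports Defs
begin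

(* Fix a frequency m and put x = omega^m, an l-th root of unity. The m-th DFT coefficient of
   the filter is sum_{k<l} x^k C A^k B; since x^l = 1 it telescopes to C (I - A^l) Y = C~ Y,
   where (I - x A) Y = B. The companion matrix is the down-shift S plus the rank-one term
   a e_d^T, and (I - x S)^(-1) is the lower triangular Toeplitz matrix T of the powers of x.
   Hence Y = T (B + x s a), where s = Y_(d-1) solves the scalar equation
   s = (T B)_(d-1) + x s (T a)_(d-1); invertibility of I - x A keeps its coefficient
   1 - x (T a)_(d-1) away from 0. Finally quad(u, v)[m] = u^T T v: the vector q of step 1
   holds the correlations of u and v, and folding q into chunks of length l leaves its DFT
   unchanged because x^l = 1. Inverting the DFT recovers the filter. *)

lemma omega_eq_cis: "omega l = cis (- 2 * pi / real l)"
  unfolding omega_def cis_conv_exp by (simp add: field_simps)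

lemma omega_power: "omega l ^ n = cis (- 2 * pi * real n / real l)"
  unfolding omega_eq_cis DeMoivre by (simp add: field_simps)

lemma omega_power_self: "0 < l \<Longrightarrow> omega l ^ l = 1"
  unfolding omega_power by (simp add: complex_eq_iff)

lemma omega_power_power_self:
  assumes "0 < l"
  shows "(omega l ^ m) ^ l = 1"
proof -
  have "(omega l ^ m) ^ l = (omega l ^ l) ^ m"
    by (simp add: mult.commute flip: power_mult)
  then show ?thesis
    using assms by (simp add: omega_power_self)
qed

lemma cnj_omega: "cnj (omega l) = inverse (omega l)"
  unfolding omega_eq_cis by (simp add: cis_cnj)

lemma omega_power_mult_cnj_power_eq_1_iff:
  assumes "k < l" "j < l"
  shows "omega l ^ k * cnj (omega l) ^ j = 1 \<longleftrightarrow> k = j"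
proof
  assume "omega l ^ k * cnj (omega l) ^ j = 1"
  then have "cos (2 * pi * real j / real l - 2 * pi * real k / real l) = 1"
    unfolding omega_power complex_cnj_power[symmetric] cis_cnj cis_mult
    by (simp add: complex_eq_iff algebra_simps)
  then obtain n :: int where "2 * pi * real j / real l - 2 * pi * real k / real l = of_int n * 2 * pi"
    using cos_one_2pi_int by blast
  then have "2 * pi * (real j - real k) = 2 * pi * (of_int n * real l)"
    using assms by (simp add: field_simps)
  then have "real j - real k = of_int n * real l"
    by simp
  moreover have "\<bar>real j - real k\<bar> < real l" using assms by linarith
  ultimately have "\<bar>real_of_int n\<bar> < 1"
    by (simp add: abs_mult mult_less_cancel_right2)
  then have "n = 0" by linarith
  then show "k = j"
    using \<open>real j - real k = of_int n * real l\<close> by simp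
qed (simp add: omega_eq_cis cis_cnj cis_mult flip: power_mult_distrib)

lemma sum_omega_orthogonality:
  assumes "k < l" "j < l"
  shows "(\<Sum>m<l. (omega l ^ k * cnj (omega l) ^ j) ^ m) = (if k = j then of_nat l else 0)"
proof -
  have "(omega l ^ k * cnj (omega l) ^ j) ^ l = (omega l ^ l) ^ k * cnj (omega l ^ l) ^ j"
    by (simp add: power_mult_distrib flip: power_mult) (simp add: mult.commute)
  also have "\<dots> = 1" using assms by (simp add: omega_power_self)
  finally show ?thesis
    using omega_power_mult_cnj_power_eq_1_iff[OF assms] by (auto simp: sum_gp_strict)
qed

lemma idft_dft:
  assumes "dim_vec w = l"
  shows "idft l (dft l w) = w"
proof (rule eq_vecI)
  fix j assume "j < dim_vec w"
  then have j: "j < l" using assms by simp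
  have "omega l ^ (m * k) * cnj (omega l) ^ (m * j) = (omega l ^ k * cnj (omega l) ^ j) ^ m" for m k
    by (simp add: power_mult_distrib mult.commute flip: power_mult)
  then have "(\<Sum>m<l. dft l w $ m * cnj (omega l) ^ (m * j))
      = (\<Sum>m<l. \<Sum>k<l. w $ k * (omega l ^ k * cnj (omega l) ^ j) ^ m)"
    by (simp add: dft_def sum_distrib_right mult.assoc)
  also have "\<dots> = (\<Sum>k<l. w $ k * (\<Sum>m<l. (omega l ^ k * cnj (omega l) ^ j) ^ m))"
    by (subst sum.swap) (simp add: sum_distrib_left)
  also have "\<dots> = w $ j * of_nat l"
    using j by (simp add: sum_omega_orthogonality if_distrib sum.delta cong: if_cong)
  finally show "idft l (dft l w) $ j = w $ j"
    using j by (simp add: idft_def)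
qed (simp add: idft_def assms)

(* Entry i of (I - x S)^(-1) g, i.e. of g multiplied by the lower triangular Toeplitz matrix
   of the powers of x. *)
definition geom_conv :: "'a::comm_semiring_1 \<Rightarrow> (nat \<Rightarrow> 'a) \<Rightarrow> nat \<Rightarrow> 'a" where
  "geom_conv x g i = (\<Sum>n\<le>i. x ^ n * g (i - n))"

lemma geom_conv_0 [simp]: "geom_conv x g 0 = g 0"
  by (simp add: geom_conv_def)

lemma geom_conv_Suc: "geom_conv x g (Suc i) = g (Suc i) + x * geom_conv x g i"
  unfolding geom_conv_def by (subst sum.atMost_Suc_shift) (simp add: sum_distrib_left mult.assoc)

lemma geom_conv_add_scaled:
  "geom_conv x (\<lambda>j. f j + c * h j) i = geom_conv x f i + c * geom_conv x h i"
  unfolding geom_conv_def by (simp add: algebra_simps sum.distrib sum_distrib_left)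

lemma sum_correlation_powers_eq_geom_conv:
  fixes u v :: "nat \<Rightarrow> 'a::comm_semiring_1"
  shows "(\<Sum>n<d. (\<Sum>j<d - n. u (j + n) * v j) * x ^ n) = (\<Sum>k<d. u k * geom_conv x v k)"
proof -
  have "{(n, j). n + j < d} = Sigma {..<d} (\<lambda>n. {..<d - n})" by auto
  then have "(\<Sum>n<d. (\<Sum>j<d - n. u (j + n) * v j) * x ^ n)
      = (\<Sum>(n, j)\<in>{(n, j). n + j < d}. u (j + n) * v j * x ^ n)"
    by (simp add: sum.Sigma sum_distrib_right)
  also have "\<dots> = (\<Sum>k<d. \<Sum>n\<le>k. u (k - n + n) * v (k - n) * x ^ n)"
    by (rule sum.triangle_reindex)
  also have "\<dots> = (\<Sum>k<d. u k * geom_conv x v k)"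
    unfolding geom_conv_def sum_distrib_left by (intro sum.cong refl) (simp add: mult_ac)
  finally show ?thesis .
qed

lemma le_mult_num_chunks: "0 < l \<Longrightarrow> d \<le> l * num_chunks d l"
proof -
  assume "0 < l"
  then have "real d \<le> real l * of_int \<lceil>real d / real l\<rceil>"
    by (metis le_of_int_ceiling pos_divide_le_eq of_nat_0_less_iff mult.commute)
  moreover have "real (num_chunks d l) = of_int \<lceil>real d / real l\<rceil>"
    unfolding num_chunks_def by simp
  ultimately have "real d \<le> real (l * num_chunks d l)" by simp
  then show ?thesis by (simp only: of_nat_le_iff)
qed

lemma sum_chunk_sums_mult_root_of_unity:
  fixes x :: "'a::comm_ring_1"
  assumes "x ^ l = 1"
  shows "(\<Sum>k<l. (\<Sum>c<nc. p (c * l + k)) * x ^ k) = (\<Sum>i<nc * l. p i * x ^ i)"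
proof -
  have "x ^ (c * l + k) = x ^ k" for c k
    using assms by (simp add: power_add mult.commute[of c] power_mult)
  then have "(\<Sum>i\<in>{c * l..<c * l + l}. p i * x ^ i) = (\<Sum>k<l. p (c * l + k) * x ^ k)" for c
    by (simp add: sum.shift_bounds_nat_ivl[of _ 0 "c * l" l, simplified] lessThan_atLeast0 add.commute)
  then show ?thesis
    by (simp add: sum.nat_group[symmetric] sum_distrib_right) (rule sum.swap)
qed

lemma quad_nth_eq_sum_powers:
  assumes "m < l"
  shows "quad d l u v $ m = (\<Sum>n<d. of_real (quad_q d u v $ n) * (omega l ^ m) ^ n)"
proof -
  define nc where "nc = num_chunks d l"
  define P where "P i = complex_of_real (if i < d then quad_q d u v $ i else 0)" for i
  have "0 < l"
    using assms by simp
  have "c * l + k < nc * l" if "c < nc" "k < l" for c k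
    using that mult_le_mono1[of "Suc c" nc l] by simp
  moreover have "dim_vec (quad_q d u v) = d"
    by (simp add: quad_q_def)
  ultimately have "quad d l u v $ m = (\<Sum>k<l. (\<Sum>c<nc. P (c * l + k)) * (omega l ^ m) ^ k)"
    using assms
    by (auto simp: quad_def Let_def nc_def[symmetric] dft_def chunk_sum_def zero_pad_def P_def
        mult.commute[of l nc] power_mult intro!: sum.cong)
  also have "\<dots> = (\<Sum>i<nc * l. P i * (omega l ^ m) ^ i)"
    by (rule sum_chunk_sums_mult_root_of_unity[OF omega_power_power_self[OF \<open>0 < l\<close>]])
  also have "\<dots> = (\<Sum>i<d. P i * (omega l ^ m) ^ i)"
    using le_mult_num_chunks[OF \<open>0 < l\<close>, of d]
    by (intro sum.mono_neutral_right) (auto simp: P_def nc_def mult.commute)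
  finally show ?thesis
    by (simp add: P_def)
qed

lemma quad_nth_eq_geom_conv:
  assumes "m < l"
  shows "quad d l u v $ m
    = (\<Sum>k<d. of_real (u $ k) * geom_conv (omega l ^ m) (\<lambda>j. of_real (v $ j)) k)"
  unfolding quad_nth_eq_sum_powers[OF assms] quad_q_def
  using sum_correlation_powers_eq_geom_conv[of "\<lambda>k. complex_of_real (u $ k)"]
  by simp

lemma quad_unit_last_nth:
  assumes "m < l" "0 < d"
  shows "quad d l (unit_vec d (d - 1)) v $ m = geom_conv (omega l ^ m) (\<lambda>j. of_real (v $ j)) (d - 1)"
proof -
  let ?g = "geom_conv (omega l ^ m) (\<lambda>j. complex_of_real (v $ j))"
  have "(\<Sum>k<d. of_real (unit_vec d (d - 1) $ k) * ?g k) = (\<Sum>k<d. if k = d - 1 then ?g k else 0)"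
    by (intro sum.cong) auto
  then show ?thesis
    using assms by (simp add: quad_nth_eq_geom_conv sum.delta')
qed

lemma sum_mult_geom_conv_add_scaled_eq_quad:
  assumes "m < l"
  shows "(\<Sum>j<d. complex_of_real (u $ j)
      * geom_conv (omega l ^ m) (\<lambda>j. complex_of_real (v $ j) + c * of_real (w $ j)) j)
    = quad d l u v $ m + c * quad d l u w $ m"
  unfolding geom_conv_add_scaled using assms
  by (simp add: quad_nth_eq_geom_conv sum.distrib sum_distrib_left algebra_simps)

lemma one_minus_smult_mult_vec:
  fixes A :: "'a::comm_ring_1 mat"
  assumes "A \<in> carrier_mat n n" "Z \<in> carrier_vec n"
  shows "(1\<^sub>m n - x \<cdot>\<^sub>m A) *\<^sub>v Z = Z - x \<cdot>\<^sub>v (A *\<^sub>v Z)"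
  using assms by (subst minus_mult_distrib_mat_vec) (auto intro!: eq_vecI)

lemma sum_powers_mult_resolvent:
  fixes A :: "'a::field mat"
  assumes A: "A \<in> carrier_mat n n" and Y: "Y \<in> carrier_vec n" and c: "c \<in> carrier_vec n"
  shows "(\<Sum>k<l. x ^ k * (c \<bullet> (A ^\<^sub>m k *\<^sub>v ((1\<^sub>m n - x \<cdot>\<^sub>m A) *\<^sub>v Y))))
    = c \<bullet> Y - x ^ l * (c \<bullet> (A ^\<^sub>m l *\<^sub>v Y))"
proof -
  define f where "f k = x ^ k * (c \<bullet> (A ^\<^sub>m k *\<^sub>v Y))" for k
  have "A ^\<^sub>m k *\<^sub>v ((1\<^sub>m n - x \<cdot>\<^sub>m A) *\<^sub>v Y) = A ^\<^sub>m k *\<^sub>v Y - x \<cdot>\<^sub>v (A ^\<^sub>m Suc k *\<^sub>v Y)" for k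
  proof -
    have "(1\<^sub>m n - x \<cdot>\<^sub>m A) *\<^sub>v Y = Y - x \<cdot>\<^sub>v (A *\<^sub>v Y)"
      using A Y by (rule one_minus_smult_mult_vec)
    moreover have "A ^\<^sub>m Suc k *\<^sub>v Y = A ^\<^sub>m k *\<^sub>v (A *\<^sub>v Y)"
      using A Y by (simp add: assoc_mult_mat_vec[of _ n n _ n])
    ultimately show ?thesis
      using A Y by (simp add: mult_minus_distrib_mat_vec[of _ n n] mult_mat_vec[of _ n n])
  qed
  moreover have "c \<bullet> (A ^\<^sub>m k *\<^sub>v Y - x \<cdot>\<^sub>v (A ^\<^sub>m Suc k *\<^sub>v Y))
      = c \<bullet> (A ^\<^sub>m k *\<^sub>v Y) - x * (c \<bullet> (A ^\<^sub>m Suc k *\<^sub>v Y))" for k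
    using A Y c by (subst scalar_prod_minus_distrib[OF c]) (auto intro!: mult_mat_vec_carrier[of _ n n])
  ultimately have "x ^ k * (c \<bullet> (A ^\<^sub>m k *\<^sub>v ((1\<^sub>m n - x \<cdot>\<^sub>m A) *\<^sub>v Y))) = f k - f (Suc k)" for k
    unfolding f_def by (simp only:) (simp add: algebra_simps)
  then have "(\<Sum>k<l. x ^ k * (c \<bullet> (A ^\<^sub>m k *\<^sub>v ((1\<^sub>m n - x \<cdot>\<^sub>m A) *\<^sub>v Y)))) = f 0 - f l"
    by (simp add: sum_lessThan_telescope')
  then show ?thesis
    using A Y by (simp add: f_def)
qed

lemma invertible_mat_mult_vec_eq_0:
  fixes M :: "'a::comm_ring_1 mat"
  assumes "invertible_mat M" "M \<in> carrier_mat n n" "W \<in> carrier_vec n" "M *\<^sub>v W = 0\<^sub>v n"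
  shows "W = 0\<^sub>v n"
proof -
  obtain N where MN: "M * N = 1\<^sub>m n" and NM: "N * M = 1\<^sub>m (dim_row N)"
    using assms(1,2) unfolding invertible_mat_def inverts_mat_def by auto
  have N: "N \<in> carrier_mat n n"
    using arg_cong[OF MN, of dim_col] arg_cong[OF NM, of dim_col] assms(2) by auto
  have "W = (N * M) *\<^sub>v W" using assms(3) NM N by simp
  also have "\<dots> = N *\<^sub>v 0\<^sub>v n" using assms(2-4) N by simp
  also have "\<dots> = 0\<^sub>v n" using N by (intro eq_vecI) auto
  finally show ?thesis .
qed

lemma of_real_mult_mat_vec_pow_nth:
  fixes C P :: "real mat"
  assumes C: "C \<in> carrier_mat 1 d" and P: "P \<in> carrier_mat d d" and B: "B \<in> carrier_vec d"
  shows "complex_of_real ((C *\<^sub>v (P ^\<^sub>m k *\<^sub>v B)) $ 0)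
    = row (map_mat of_real C) 0 \<bullet> (map_mat of_real P ^\<^sub>m k *\<^sub>v map_vec of_real B)"
proof -
  have Pk: "P ^\<^sub>m k \<in> carrier_mat d d"
    using P by simp
  have "complex_of_real ((C *\<^sub>v (P ^\<^sub>m k *\<^sub>v B)) $ 0)
      = map_vec of_real (C *\<^sub>v (P ^\<^sub>m k *\<^sub>v B)) $ 0"
    using C by simp
  also have "map_vec of_real (C *\<^sub>v (P ^\<^sub>m k *\<^sub>v B))
      = map_mat of_real C *\<^sub>v map_vec of_real (P ^\<^sub>m k *\<^sub>v B)"
    using Pk B by (intro of_real_hom.mult_mat_vec_hom[OF C]) simp
  also have "map_vec of_real (P ^\<^sub>m k *\<^sub>v B) = map_mat of_real P ^\<^sub>m k *\<^sub>v map_vec of_real B"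
    by (simp add: of_real_hom.mult_mat_vec_hom[OF Pk B] of_real_hom.mat_hom_pow[OF P])
  finally show ?thesis
    using C by simp
qed

lemma map_mat_of_real_one_minus:
  "M \<in> carrier_mat n n \<Longrightarrow> map_mat of_real (1\<^sub>m n - M) = 1\<^sub>m n - map_mat of_real M"
  by (intro eq_matI) auto

lemma of_real_row_mult_scalar_prod:
  fixes C N :: "real mat" and Y :: "complex vec"
  assumes C: "C \<in> carrier_mat 1 d" and N: "N \<in> carrier_mat d d" and Y: "Y \<in> carrier_vec d"
  shows "(\<Sum>k<d. complex_of_real (row (C * N) 0 $ k) * Y $ k)
    = row (map_mat of_real C) 0 \<bullet> (map_mat of_real N *\<^sub>v Y)"
proof -
  have "(\<Sum>k<d. complex_of_real (row (C * N) 0 $ k) * Y $ k) = row (map_mat of_real (C * N)) 0 \<bullet> Y"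
    using C N Y by (simp add: scalar_prod_def lessThan_atLeast0)
  also have "\<dots> = ((map_mat of_real C * map_mat of_real N) *\<^sub>v Y) $ 0"
    using C N by (simp add: of_real_hom.mat_hom_mult[OF C N])
  also have "\<dots> = row (map_mat of_real C) 0 \<bullet> (map_mat of_real N *\<^sub>v Y)"
    using C N Y by simp
  finally show ?thesis .
qed

lemma sum_impulse_response_root_of_unity:
  fixes C P :: "real mat" and B :: "real vec" and Y :: "complex vec"
  assumes C: "C \<in> carrier_mat 1 d" and P: "P \<in> carrier_mat d d" and B: "B \<in> carrier_vec d"
    and root: "x ^ l = 1" and Y: "Y \<in> carrier_vec d"
    and resolvent: "(1\<^sub>m d - x \<cdot>\<^sub>m map_mat complex_of_real P) *\<^sub>v Y = map_vec of_real B"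
  shows "(\<Sum>k<l. complex_of_real ((C *\<^sub>v (P ^\<^sub>m k *\<^sub>v B)) $ 0) * x ^ k)
    = (\<Sum>j<d. complex_of_real (row (C * (1\<^sub>m d - P ^\<^sub>m l)) 0 $ j) * Y $ j)"
proof -
  let ?A = "map_mat complex_of_real P" and ?c = "row (map_mat complex_of_real C) 0"
  have A: "?A \<in> carrier_mat d d"
    using P by simp
  have c: "?c \<in> carrier_vec d"
    using C by (simp add: carrier_vecI)
  have N: "1\<^sub>m d - P ^\<^sub>m l \<in> carrier_mat d d"
    by (intro minus_carrier_mat pow_carrier_mat P)
  have "(\<Sum>k<l. complex_of_real ((C *\<^sub>v (P ^\<^sub>m k *\<^sub>v B)) $ 0) * x ^ k)
      = (\<Sum>k<l. x ^ k * (?c \<bullet> (?A ^\<^sub>m k *\<^sub>v ((1\<^sub>m d - x \<cdot>\<^sub>m ?A) *\<^sub>v Y))))"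
    unfolding resolvent by (simp add: of_real_mult_mat_vec_pow_nth[OF C P B] mult.commute)
  also have "\<dots> = ?c \<bullet> Y - ?c \<bullet> (?A ^\<^sub>m l *\<^sub>v Y)"
    using sum_powers_mult_resolvent[OF A Y c] root by simp
  also have "\<dots> = ?c \<bullet> ((1\<^sub>m d - ?A ^\<^sub>m l) *\<^sub>v Y)"
    using A Y by (simp add: minus_mult_distrib_mat_vec[of _ d d]
        scalar_prod_minus_distrib[OF c Y mult_mat_vec_carrier[OF pow_carrier_mat[OF A] Y]])
  also have "1\<^sub>m d - ?A ^\<^sub>m l = map_mat complex_of_real (1\<^sub>m d - P ^\<^sub>m l)"
    by (simp add: map_mat_of_real_one_minus[OF pow_carrier_mat[OF P]] of_real_hom.mat_hom_pow[OF P])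
  finally show ?thesis
    by (simp only: of_real_row_mult_scalar_prod[OF C N Y])
qed

lemma dim_row_companion [simp]: "dim_row (companion d a) = d"
  and dim_col_companion [simp]: "dim_col (companion d a) = d"
  by (simp_all add: companion_def shift_mat_def)

lemma companion_carrier_mat: "companion d a \<in> carrier_mat d d"
  by (simp add: carrier_matI)

lemma companion_mult_vec_nth:
  fixes Z :: "complex vec"
  assumes Z: "Z \<in> carrier_vec d" and i: "i < d"
  shows "(map_mat complex_of_real (companion d a) *\<^sub>v Z) $ i
    = (if i = 0 then 0 else Z $ (i - 1)) + of_real (a $ i) * Z $ (d - 1)"
proof -
  have "(map_mat complex_of_real (companion d a) *\<^sub>v Z) $ i
      = (\<Sum>j<d. (if j = i - 1 \<and> i \<noteq> 0 then Z $ j else 0)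
              + (if j = d - 1 then of_real (a $ i) * Z $ j else 0))"
    using Z i unfolding companion_def shift_mat_def
    by (auto simp: scalar_prod_def lessThan_atLeast0 distrib_right intro!: sum.cong)
  also have "\<dots> = (if i = 0 then 0 else Z $ (i - 1)) + of_real (a $ i) * Z $ (d - 1)"
    using i by (simp add: sum.distrib)
  finally show ?thesis .
qed

lemma resolvent_companion_mult_geom_conv:
  assumes "i < d"
  shows "((1\<^sub>m d - x \<cdot>\<^sub>m map_mat complex_of_real (companion d a)) *\<^sub>v vec d (geom_conv x g)) $ i
    = g i - of_real (a $ i) * (x * geom_conv x g (d - 1))"
proof -
  let ?A = "map_mat complex_of_real (companion d a)" and ?Z = "vec d (geom_conv x g)"
  have "?A \<in> carrier_mat d d"
    by (simp add: carrier_matI)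
  then have "((1\<^sub>m d - x \<cdot>\<^sub>m ?A) *\<^sub>v ?Z) $ i = (?Z - x \<cdot>\<^sub>v (?A *\<^sub>v ?Z)) $ i"
    by (simp only: one_minus_smult_mult_vec[OF _ vec_carrier])
  also have "\<dots> = geom_conv x g i - x * (?A *\<^sub>v ?Z) $ i"
    using assms by (simp del: index_mult_mat_vec)
  also have "(?A *\<^sub>v ?Z) $ i
      = (if i = 0 then 0 else geom_conv x g (i - 1)) + of_real (a $ i) * geom_conv x g (d - 1)"
    using assms companion_mult_vec_nth[of ?Z d i a] by (simp del: index_mult_mat_vec)
  finally show ?thesis
    by (cases i) (simp_all add: geom_conv_Suc algebra_simps)
qed

lemma companion_resolvent_denominator_neq_1:
  assumes "0 < d" and inv: "invertible_mat (1\<^sub>m d - x \<cdot>\<^sub>m map_mat complex_of_real (companion d a))"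
  shows "x * geom_conv x (\<lambda>j. of_real (a $ j)) (d - 1) \<noteq> 1"
proof
  let ?\<alpha> = "\<lambda>j. complex_of_real (a $ j)"
  let ?W = "vec d (geom_conv x ?\<alpha>)"
  assume q: "x * geom_conv x ?\<alpha> (d - 1) = 1"
  have "(1\<^sub>m d - x \<cdot>\<^sub>m map_mat complex_of_real (companion d a)) *\<^sub>v ?W = 0\<^sub>v d"
  proof (rule eq_vecI)
    fix i assume "i < dim_vec (0\<^sub>v d :: complex vec)"
    then show "((1\<^sub>m d - x \<cdot>\<^sub>m map_mat complex_of_real (companion d a)) *\<^sub>v ?W) $ i = 0\<^sub>v d $ i"
      using q by (simp add: resolvent_companion_mult_geom_conv del: index_mult_mat_vec)
  qed simp
  then have "?W = 0\<^sub>v d"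
    by (rule invertible_mat_mult_vec_eq_0[OF inv, rotated 2]) (simp_all add: carrier_matI)
  then have "?W $ (d - 1) = 0"
    using \<open>0 < d\<close> by simp
  then have "geom_conv x ?\<alpha> (d - 1) = 0"
    using \<open>0 < d\<close> by simp
  with \<open>x * geom_conv x ?\<alpha> (d - 1) = 1\<close> show False by simp
qed

lemma companion_resolvent_eq:
  fixes b :: "nat \<Rightarrow> complex"
  assumes "x * geom_conv x (\<lambda>j. of_real (a $ j)) (d - 1) \<noteq> 1"
  defines "s \<equiv> geom_conv x b (d - 1) / (1 - x * geom_conv x (\<lambda>j. of_real (a $ j)) (d - 1))"
  shows "(1\<^sub>m d - x \<cdot>\<^sub>m map_mat complex_of_real (companion d a))
      *\<^sub>v vec d (geom_conv x (\<lambda>j. b j + x * s * of_real (a $ j))) = vec d b"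
proof -
  have s: "geom_conv x (\<lambda>j. b j + x * s * of_real (a $ j)) (d - 1) = s"
    using assms(1) unfolding geom_conv_add_scaled s_def by (simp add: field_simps)
  show ?thesis
  proof (rule eq_vecI)
    fix i assume "i < dim_vec (vec d b)"
    then show "((1\<^sub>m d - x \<cdot>\<^sub>m map_mat complex_of_real (companion d a))
        *\<^sub>v vec d (geom_conv x (\<lambda>j. b j + x * s * of_real (a $ j)))) $ i = vec d b $ i"
      using s by (simp add: resolvent_companion_mult_geom_conv algebra_simps del: index_mult_mat_vec)
  qed simp
qed

lemma companion_resolvent_quad:
  fixes a B :: "real vec"
  assumes "0 < d" "m < l" "dim_vec B = d"
    and inv: "invertible_mat (1\<^sub>m d - omega l ^ m \<cdot>\<^sub>m map_mat complex_of_real (companion d a))"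
  defines "e \<equiv> unit_vec d (d - 1)"
  obtains Y where "Y \<in> carrier_vec d"
    and "(1\<^sub>m d - omega l ^ m \<cdot>\<^sub>m map_mat complex_of_real (companion d a)) *\<^sub>v Y = map_vec of_real B"
    and "\<And>u. (\<Sum>j<d. complex_of_real (u $ j) * Y $ j) = quad d l u B $ m
      + quad d l u a $ m * quad d l e B $ m / (cnj (omega l) ^ m - quad d l e a $ m)"
proof
  define x where "x = omega l ^ m"
  define qB where "qB = geom_conv x (\<lambda>j. complex_of_real (B $ j)) (d - 1)"
  define qa where "qa = geom_conv x (\<lambda>j. complex_of_real (a $ j)) (d - 1)"
  define s where "s = qB / (1 - x * qa)"
  define Y where "Y = vec d (geom_conv x (\<lambda>j. complex_of_real (B $ j) + x * s * of_real (a $ j)))"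
  show "Y \<in> carrier_vec d"
    by (simp add: Y_def)
  have denom: "x * qa \<noteq> 1"
    using companion_resolvent_denominator_neq_1[OF assms(1) inv] unfolding x_def qa_def .
  have "(1\<^sub>m d - x \<cdot>\<^sub>m map_mat complex_of_real (companion d a)) *\<^sub>v Y
      = vec d (\<lambda>j. complex_of_real (B $ j))"
    using companion_resolvent_eq[OF denom[unfolded qa_def]] unfolding Y_def s_def qB_def qa_def .
  also have "\<dots> = map_vec of_real B"
    using assms(3) by auto
  finally show "(1\<^sub>m d - omega l ^ m \<cdot>\<^sub>m map_mat complex_of_real (companion d a)) *\<^sub>v Y
      = map_vec of_real B"
    unfolding x_def .
  have "x \<noteq> 0"
    by (simp add: x_def omega_def)
  have cnj: "cnj (omega l) ^ m = inverse x"
    by (simp add: x_def cnj_omega power_inverse)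
  have e: "quad d l e B $ m = qB" "quad d l e a $ m = qa"
    using quad_unit_last_nth[OF assms(2,1)] by (simp_all add: e_def x_def qB_def qa_def)
  have "1 - x * qa \<noteq> 0"
    using denom by simp
  then have "x * s = quad d l e B $ m / (cnj (omega l) ^ m - quad d l e a $ m)"
    unfolding cnj e using \<open>x \<noteq> 0\<close> by (simp add: s_def field_simps)
  then show "(\<Sum>j<d. complex_of_real (u $ j) * Y $ j) = quad d l u B $ m
      + quad d l u a $ m * quad d l e B $ m / (cnj (omega l) ^ m - quad d l e a $ m)" for u
    using sum_mult_geom_conv_add_scaled_eq_quad[OF assms(2),
        where u = u and v = B and c = "x * s" and w = a]
    by (simp add: Y_def x_def)
qed

lemma dft_output_filter_nth:
  fixes a B :: "real vec" and C :: "real mat"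
  assumes "0 < d" "m < l" "dim_vec B = d" and C: "C \<in> carrier_mat 1 d"
    and inv: "invertible_mat (1\<^sub>m d - omega l ^ m \<cdot>\<^sub>m map_mat complex_of_real (companion d a))"
  defines "Ct \<equiv> row (C * (1\<^sub>m d - companion d a ^\<^sub>m l)) 0" and "e \<equiv> unit_vec d (d - 1)"
  shows "(\<Sum>k<l. complex_of_real ((C *\<^sub>v (companion d a ^\<^sub>m k *\<^sub>v B)) $ 0) * omega l ^ (m * k))
    = quad d l Ct B $ m + quad d l Ct a $ m * quad d l e B $ m / (cnj (omega l) ^ m - quad d l e a $ m)"
proof -
  obtain Y where Y: "Y \<in> carrier_vec d"
    and resolvent: "(1\<^sub>m d - omega l ^ m \<cdot>\<^sub>m map_mat complex_of_real (companion d a)) *\<^sub>v Y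
      = map_vec of_real B"
    and pairing: "\<And>u. (\<Sum>j<d. complex_of_real (u $ j) * Y $ j) = quad d l u B $ m
      + quad d l u a $ m * quad d l e B $ m / (cnj (omega l) ^ m - quad d l e a $ m)"
    using companion_resolvent_quad[OF assms(1-3) inv] unfolding e_def by blast
  have root: "(omega l ^ m) ^ l = 1"
    using assms(2) by (simp add: omega_power_power_self)
  show ?thesis
    using sum_impulse_response_root_of_unity[OF C companion_carrier_mat carrier_vecI[OF assms(3)]
        root Y resolvent]
    by (simp add: power_mult pairing Ct_def)
qed

theorem theorem1:
  fixes d l :: nat and a B :: "real vec" and C :: "real mat"
  assumes "d \<ge> 1" and "l \<ge> 1"
    and "dim_vec a = d" and "dim_vec B = d" and "C \<in> carrier_mat 1 d"
    and "\<forall>m<l. invertible_mat (1\<^sub>m d - omega l ^ m \<cdot>\<^sub>m map_mat complex_of_real (companion d a))"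
  shows "algorithm1 d l a B C =
         vec l (\<lambda>k. complex_of_real ((C *\<^sub>v ((companion d a ^\<^sub>m k) *\<^sub>v B)) $ 0))"
proof -
  let ?F = "vec l (\<lambda>k. complex_of_real ((C *\<^sub>v ((companion d a ^\<^sub>m k) *\<^sub>v B)) $ 0))"
  let ?Ct = "row (C * (1\<^sub>m d - companion d a ^\<^sub>m l)) 0" and ?e = "unit_vec d (d - 1)"
  have "vec l (\<lambda>m. quad d l ?Ct B $ m + quad d l ?Ct a $ m * quad d l ?e B $ m
      / (vec l (\<lambda>m. cnj (omega l) ^ m) $ m - quad d l ?e a $ m)) = dft l ?F"
  proof (rule eq_vecI)
    fix m assume "m < dim_vec (dft l ?F)"
    then have "m < l" by (simp add: dft_def)
    then show "vec l (\<lambda>m. quad d l ?Ct B $ m + quad d l ?Ct a $ m * quad d l ?e B $ m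
        / (vec l (\<lambda>m. cnj (omega l) ^ m) $ m - quad d l ?e a $ m)) $ m = dft l ?F $ m"
      using dft_output_filter_nth[of d m l B C a] assms by (simp add: dft_def)
  qed (simp add: dft_def)
  then show ?thesis
    unfolding algorithm1_def Let_def by (simp add: idft_dft)
qed

end
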